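(* Let $c\in\mathbb{R}^n$ with $c_1\ge\cdots\ge c_n\ge0$ and $u\in\mathbb{R}^n$ with $u_i>0$ for all $i$. There exists an algorithm that solves the problem of minimizing $\frac12\left(\sum_{i=1}^n x_i\right)^2-\sum_{i=1}^n c_ix_i$ subject to $0\le x\le u$ in $O(n\log n)$ time.
   Context: Time is measured in arithmetic operations and comparisons on real numbers. *)

theory Defs
  imports Complex_Main
begin

text \<open>Machine state: a real memory (nat-addressed cells holding reals) and a file of
natural-number registers used for addressing and loop control.\<close>

record state =
  mem :: "nat \<Rightarrow> real"
  reg :: "nat \<Rightarrow> nat"

datatype rop = RAdd | RSub | RMul | RDiv

fun rop_sem :: "rop \<Rightarrow> real \<Rightarrow> real \<Rightarrow> real" where
  "rop_sem RAdd a b = a + b"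
| "rop_sem RSub a b = a - b"
| "rop_sem RMul a b = a * b"
| "rop_sem RDiv a b = a / b"

datatype test =
    RLess nat nat
  | RLeq nat nat
  | NLess nat nat
  | NEq nat nat

fun test_sem :: "test \<Rightarrow> state \<Rightarrow> bool" where
  "test_sem (RLess a b) s = (mem s (reg s a) < mem s (reg s b))"
| "test_sem (RLeq a b) s = (mem s (reg s a) \<le> mem s (reg s b))"
| "test_sem (NLess a b) s = (reg s a < reg s b)"
| "test_sem (NEq a b) s = (reg s a = reg s b)"

datatype com =
    Skip
  | RConst nat real
  | RCopy nat nat
  | RBin rop nat nat nat
  | NConst nat nat
  | NAdd nat nat nat
  | NSub nat nat nat         \<comment> \<open>reg d := reg a - reg b (truncated)\<close>
  | NHalf nat nat
  | Seq com com
  | If test com com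
  | While test com

definition set_mem :: "state \<Rightarrow> nat \<Rightarrow> real \<Rightarrow> state" where
  "set_mem s i r = s\<lparr>mem := (mem s)(i := r)\<rparr>"

definition set_reg :: "state \<Rightarrow> nat \<Rightarrow> nat \<Rightarrow> state" where
  "set_reg s i k = s\<lparr>reg := (reg s)(i := k)\<rparr>"

inductive exec :: "com \<Rightarrow> state \<Rightarrow> nat \<Rightarrow> state \<Rightarrow> bool" where
  "exec Skip s 0 s"
| "exec (RConst d r) s 1 (set_mem s (reg s d) r)"
| "exec (RCopy a d) s 1 (set_mem s (reg s d) (mem s (reg s a)))"
| "exec (RBin op a b d) s 1
     (set_mem s (reg s d) (rop_sem op (mem s (reg s a)) (mem s (reg s b))))"
| "exec (NConst d k) s 1 (set_reg s d k)"
| "exec (NAdd a b d) s 1 (set_reg s d (reg s a + reg s b))"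
| "exec (NSub a b d) s 1 (set_reg s d (reg s a - reg s b))"
| "exec (NHalf a d) s 1 (set_reg s d (reg s a div 2))"
| "exec c1 s t1 s1 \<Longrightarrow> exec c2 s1 t2 s2 \<Longrightarrow> exec (Seq c1 c2) s (t1 + t2) s2"
| "test_sem b s \<Longrightarrow> exec c1 s t s' \<Longrightarrow> exec (If b c1 c2) s (Suc t) s'"
| "\<not> test_sem b s \<Longrightarrow> exec c2 s t s' \<Longrightarrow> exec (If b c1 c2) s (Suc t) s'"
| "\<not> test_sem b s \<Longrightarrow> exec (While b c) s 1 s"
| "test_sem b s \<Longrightarrow> exec c s t1 s1 \<Longrightarrow> exec (While b c) s1 t2 s2
     \<Longrightarrow> exec (While b c) s (Suc (t1 + t2)) s2"

text \<open>Vectors in R^n are functions nat \<Rightarrow> real indexed by 0..n-1 (index i here is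
coordinate i+1 in the paper).  Input: register 0 holds n, memory cells 0..n-1 hold c,
cells n..2n-1 hold u, all other cells and registers are 0.  Output: cells 0..n-1 hold x.\<close>

definition init_state :: "nat \<Rightarrow> (nat \<Rightarrow> real) \<Rightarrow> (nat \<Rightarrow> real) \<Rightarrow> state" where
  "init_state n c u =
     \<lparr> mem = (\<lambda>i. if i < n then c i else if i < 2 * n then u (i - n) else 0),
       reg = (\<lambda>i. if i = 0 then n else 0) \<rparr>"

definition objective :: "nat \<Rightarrow> (nat \<Rightarrow> real) \<Rightarrow> (nat \<Rightarrow> real) \<Rightarrow> real" where
  "objective n c x = (1/2) * (\<Sum>i<n. x i)^2 - (\<Sum>i<n. c i * x i)"

definition feasible :: "nat \<Rightarrow> (nat \<Rightarrow> real) \<Rightarrow> (nat \<Rightarrow> real) \<Rightarrow> bool" where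
  "feasible n u x \<longleftrightarrow> (\<forall>i<n. 0 \<le> x i \<and> x i \<le> u i)"

definition is_minimizer :: "nat \<Rightarrow> (nat \<Rightarrow> real) \<Rightarrow> (nat \<Rightarrow> real) \<Rightarrow> (nat \<Rightarrow> real) \<Rightarrow> bool" where
  "is_minimizer n c u x \<longleftrightarrow>
     feasible n u x \<and> (\<forall>y. feasible n u y \<longrightarrow> objective n c x \<le> objective n c y)"

end

theory Submission
  imports Defs
begin

text \<open>The objective is convex with gradient \<open>(S - c\<^sub>i)\<^sub>i\<close>, where \<open>S = \<Sum>x\<close>, so a feasible
\<open>x\<close> is optimal as soon as \<open>x\<^sub>i > 0\<close> forces \<open>S \<le> c\<^sub>i\<close> and \<open>x\<^sub>i < u\<^sub>i\<close> forces \<open>c\<^sub>i \<le> S\<close>.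
For non-increasing \<open>c\<close> these conditions are met by the greedy vector
\<open>x\<^sub>k = min u\<^sub>k (max 0 (c\<^sub>k - (x\<^sub>0 + \<dots> + x\<^sub>k\<^sub>-\<^sub>1)))\<close>: the partial sums never exceed a
\<open>c\<^sub>k\<close> with \<open>x\<^sub>k > 0\<close>, and already reach \<open>c\<^sub>k\<close> when \<open>x\<^sub>k < u\<^sub>k\<close>.  One pass computes it,
so the running time is even linear.\<close>

lemma objective_diff:
  "objective n c y - objective n c x =
     ((\<Sum>i<n. y i) - (\<Sum>i<n. x i))\<^sup>2 / 2 + (\<Sum>i<n. ((\<Sum>j<n. x j) - c i) * (y i - x i))"
proof -
  define S where "S = (\<Sum>j<n. x j)"
  have "(\<Sum>i<n. (S - c i) * (y i - x i))
        = S * (\<Sum>i<n. y i) - S * S - (\<Sum>i<n. c i * y i) + (\<Sum>i<n. c i * x i)"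
    by (simp add: algebra_simps sum.distrib sum_subtractf sum_distrib_left S_def)
  then show ?thesis
    unfolding objective_def S_def[symmetric] by (simp add: power2_eq_square field_simps)
qed

lemma is_minimizerI:
  assumes feas: "feasible n u x"
    and pos: "\<And>i. i < n \<Longrightarrow> 0 < x i \<Longrightarrow> (\<Sum>j<n. x j) \<le> c i"
    and below: "\<And>i. i < n \<Longrightarrow> x i < u i \<Longrightarrow> c i \<le> (\<Sum>j<n. x j)"
  shows "is_minimizer n c u x"
  unfolding is_minimizer_def
proof (intro conjI allI impI feas)
  fix y assume "feasible n u y"
  then have y: "0 \<le> y i" "y i \<le> u i" if "i < n" for i
    using that by (auto simp: feasible_def)
  have "0 \<le> ((\<Sum>j<n. x j) - c i) * (y i - x i)" if i: "i < n" for i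
  proof (cases "y i - x i" "0::real" rule: linorder_cases)
    case less
    then show ?thesis using pos[OF i] y[OF i] by (simp add: mult_nonpos_nonpos)
  next
    case greater
    then show ?thesis using below[OF i] y[OF i] by simp
  qed simp
  then have "0 \<le> objective n c y - objective n c x"
    unfolding objective_diff by (intro add_nonneg_nonneg sum_nonneg) auto
  then show "objective n c x \<le> objective n c y" by simp
qed

lemma is_minimizer_cong:
  "(\<And>i. i < n \<Longrightarrow> x i = y i) \<Longrightarrow> is_minimizer n c u x = is_minimizer n c u y"
  unfolding is_minimizer_def feasible_def objective_def by simp

fun greedy_sum :: "(nat \<Rightarrow> real) \<Rightarrow> (nat \<Rightarrow> real) \<Rightarrow> nat \<Rightarrow> real" where
  "greedy_sum c u 0 = 0"
| "greedy_sum c u (Suc k) = greedy_sum c u k + min (u k) (max 0 (c k - greedy_sum c u k))"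

definition greedy :: "(nat \<Rightarrow> real) \<Rightarrow> (nat \<Rightarrow> real) \<Rightarrow> nat \<Rightarrow> real" where
  "greedy c u k = min (u k) (max 0 (c k - greedy_sum c u k))"

lemma greedy_sum_Suc: "greedy_sum c u (Suc k) = greedy_sum c u k + greedy c u k"
  by (simp add: greedy_def)

declare greedy_sum.simps(2) [simp del]

lemma greedy_sum_eq_sum: "greedy_sum c u n = (\<Sum>i<n. greedy c u i)"
  by (induction n) (simp_all add: greedy_sum_Suc)

lemma greedy_nonneg: "0 \<le> u k \<Longrightarrow> 0 \<le> greedy c u k"
  by (simp add: greedy_def)

lemma greedy_le: "greedy c u k \<le> u k"
  by (simp add: greedy_def)

lemma greedy_sum_mono:
  assumes "j \<le> k" and "\<And>i. i < k \<Longrightarrow> 0 \<le> u i"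
  shows "greedy_sum c u j \<le> greedy_sum c u k"
  using assms
proof (induction k rule: dec_induct)
  case (step k)
  then show ?case using greedy_nonneg[of u k c] by (simp add: greedy_sum_Suc)
qed simp

lemma greedy_sum_Suc_le_max:
  "0 \<le> u k \<Longrightarrow> greedy_sum c u (Suc k) \<le> max (greedy_sum c u k) (c k)"
  by (auto simp: greedy_sum_Suc greedy_def)

lemma greedy_sum_le_if_greedy_pos:
  assumes sorted: "\<And>i j. i \<le> j \<Longrightarrow> j < n \<Longrightarrow> c j \<le> c i" and u_nonneg: "\<And>i. i < n \<Longrightarrow> 0 \<le> u i"
    and pos: "0 < greedy c u k"
  shows "k < j \<Longrightarrow> j \<le> n \<Longrightarrow> greedy_sum c u j \<le> c k"
proof (induction j)
  case (Suc j)
  show ?case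
  proof (cases "j = k")
    case True
    then show ?thesis using pos by (auto simp: greedy_sum_Suc greedy_def)
  next
    case False
    with Suc have "greedy_sum c u j \<le> c k" "c j \<le> c k" "0 \<le> u j" using sorted u_nonneg by auto
    then show ?thesis using greedy_sum_Suc_le_max[of u j c] by linarith
  qed
qed simp

lemma c_le_greedy_sum_if_greedy_lt:
  assumes u_nonneg: "\<And>i. i < n \<Longrightarrow> 0 \<le> u i" and "k < n" and lt: "greedy c u k < u k"
  shows "c k \<le> greedy_sum c u n"
proof -
  have "c k \<le> greedy_sum c u (Suc k)" using lt by (auto simp: greedy_sum_Suc greedy_def)
  also have "\<dots> \<le> greedy_sum c u n" using \<open>k < n\<close> u_nonneg by (intro greedy_sum_mono) auto
  finally show ?thesis .
qed

lemma greedy_is_minimizer: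
  assumes sorted: "\<And>i j. i \<le> j \<Longrightarrow> j < n \<Longrightarrow> c j \<le> c i" and u_nonneg: "\<And>i. i < n \<Longrightarrow> 0 \<le> u i"
  shows "is_minimizer n c u (greedy c u)"
proof (rule is_minimizerI)
  show "feasible n u (greedy c u)"
    using u_nonneg greedy_nonneg greedy_le by (auto simp: feasible_def)
next
  fix i assume "i < n" "0 < greedy c u i"
  then show "(\<Sum>j<n. greedy c u j) \<le> c i"
    using greedy_sum_le_if_greedy_pos[of n c u i n] sorted u_nonneg by (simp add: greedy_sum_eq_sum[symmetric])
next
  fix i assume "i < n" "greedy c u i < u i"
  then show "c i \<le> (\<Sum>j<n. greedy c u j)"
    using c_le_greedy_sum_if_greedy_lt[of n u i c] u_nonneg by (simp add: greedy_sum_eq_sum[symmetric])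
qed

lemma mem_set_mem [simp]: "mem (set_mem s i r) = (mem s)(i := r)"
  by (simp add: set_mem_def)

lemma reg_set_mem [simp]: "reg (set_mem s i r) = reg s"
  by (simp add: set_mem_def)

lemma mem_set_reg [simp]: "mem (set_reg s i k) = mem s"
  by (simp add: set_reg_def)

lemma reg_set_reg [simp]: "reg (set_reg s i k) = (reg s)(i := k)"
  by (simp add: set_reg_def)

lemma set_mem_same [simp]: "set_mem s i (mem s i) = s"
  by (simp add: set_mem_def)

lemma exec_RBin:
  "exec (RBin op a b d) s 1 (set_mem s (reg s d) (rop_sem op (mem s (reg s a)) (mem s (reg s b))))"
  by (rule exec.intros)

lemma exec_NConst: "exec (NConst d k) s 1 (set_reg s d k)"
  by (rule exec.intros)

lemma exec_NAdd: "exec (NAdd a b d) s 1 (set_reg s d (reg s a + reg s b))"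
  by (rule exec.intros)

lemma exec_RCopy: "exec (RCopy a d) s 1 (set_mem s (reg s d) (mem s (reg s a)))"
  by (rule exec.intros)

lemma exec_SeqI: "exec c1 s t1 s1 \<Longrightarrow> exec c2 s1 t2 s2 \<Longrightarrow> t = t1 + t2 \<Longrightarrow> exec (Seq c1 c2) s t s2"
  using exec.intros(9) by blast

lemma exec_If_uniform:
  "exec c1 s t s1 \<Longrightarrow> exec c2 s t s2 \<Longrightarrow> exec (If b c1 c2) s (Suc t) (if test_sem b s then s1 else s2)"
  by (cases "test_sem b s") (auto intro: exec.intros)

text \<open>\<open>RCopy a a\<close> is a unit-cost no-op, so both branches cost the same.\<close>

definition min_into :: "nat \<Rightarrow> nat \<Rightarrow> com" where
  "min_into b a = If (RLess b a) (RCopy b a) (RCopy a a)"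

definition max_into :: "nat \<Rightarrow> nat \<Rightarrow> com" where
  "max_into b a = If (RLess a b) (RCopy b a) (RCopy a a)"

lemma exec_min_into:
  "exec (min_into b a) s 2 (set_mem s (reg s a) (min (mem s (reg s b)) (mem s (reg s a))))"
  using exec_If_uniform[OF exec_RCopy[of b a s] exec_RCopy[of a a s], of "RLess b a"]
  by (auto simp: min_into_def min_def numeral_2_eq_2 split: if_splits)

lemma exec_max_into:
  "exec (max_into b a) s 2 (set_mem s (reg s a) (max (mem s (reg s b)) (mem s (reg s a))))"
  using exec_If_uniform[OF exec_RCopy[of b a s] exec_RCopy[of a a s], of "RLess a b"]
  by (auto simp: max_into_def max_def numeral_2_eq_2 split: if_splits)

definition greedy_step :: com where
  "greedy_step =
     Seq (RBin RSub 1 3 4) (Seq (max_into 6 4) (Seq (min_into 2 4)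
     (Seq (RCopy 4 1) (Seq (RBin RAdd 3 4 3) (Seq (NAdd 1 5 1) (NAdd 2 5 2))))))"

text \<open>Memory layout during the loop: cells \<open>0..<k\<close> hold \<open>x\<^sub>0..x\<^sub>k\<^sub>-\<^sub>1\<close> and cells \<open>k..<n\<close>
the unread \<open>c\<^sub>k..c\<^sub>n\<^sub>-\<^sub>1\<close>; cell \<open>2n\<close> holds the running sum, \<open>2n+1\<close> is scratch and
\<open>2n+2\<close> holds the constant 0.  Registers 1 and 2 point at \<open>c\<^sub>k\<close> and \<open>u\<^sub>k\<close>.\<close>

definition greedy_inv :: "nat \<Rightarrow> (nat \<Rightarrow> real) \<Rightarrow> (nat \<Rightarrow> real) \<Rightarrow> nat \<Rightarrow> state \<Rightarrow> bool" where
  "greedy_inv n c u k s \<longleftrightarrow>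
     reg s 0 = n \<and> reg s 1 = k \<and> reg s 2 = n + k \<and> reg s 3 = 2 * n \<and> reg s 4 = 2 * n + 1
     \<and> reg s 5 = 1 \<and> reg s 6 = 2 * n + 2
     \<and> (\<forall>i<k. mem s i = greedy c u i) \<and> (\<forall>i. k \<le> i \<and> i < n \<longrightarrow> mem s i = c i)
     \<and> (\<forall>i<n. mem s (n + i) = u i) \<and> mem s (2 * n) = greedy_sum c u k \<and> mem s (2 * n + 2) = 0"

lemma greedy_step_preserves_inv:
  assumes "greedy_inv n c u k s" and "k < n"
  shows "\<exists>s'. exec greedy_step s 9 s' \<and> greedy_inv n c u (Suc k) s'"
  unfolding greedy_step_def
  by (intro exI conjI, (rule exec_SeqI exec_RBin exec_max_into exec_min_into exec_RCopy exec_NAdd)+)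
    (use assms in \<open>auto simp: greedy_inv_def greedy_def greedy_sum_Suc\<close>)

lemma exec_While_counted:
  assumes step: "\<And>j s. j < m \<Longrightarrow> I j s \<Longrightarrow> test_sem b s \<and> (\<exists>s'. exec c s t s' \<and> I (Suc j) s')"
    and stop: "\<And>s. I m s \<Longrightarrow> \<not> test_sem b s"
  shows "I k s \<Longrightarrow> k \<le> m \<Longrightarrow> \<exists>s'. exec (While b c) s (Suc t * (m - k) + 1) s' \<and> I m s'"
proof (induction "m - k" arbitrary: k s)
  case 0
  then have "k = m" by simp
  then show ?case using 0 stop exec.intros(12) by fastforce
next
  case (Suc d)
  then have "k < m" by simp
  with Suc.prems step obtain s1 where b: "test_sem b s" and s1: "exec c s t s1" "I (Suc k) s1"
    by blast
  have "d = m - Suc k" using Suc.hyps(2) by simp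
  with Suc.hyps(1) s1(2) \<open>k < m\<close> obtain s2
    where "exec (While b c) s1 (Suc t * (m - Suc k) + 1) s2" "I m s2"
    by (metis Suc_leI)
  moreover have "Suc (t + (Suc t * (m - Suc k) + 1)) = Suc t * (m - k) + 1"
    unfolding Suc.hyps(2)[symmetric] \<open>d = m - Suc k\<close>[symmetric] by simp
  ultimately show ?case using exec.intros(13)[OF b s1(1)] by metis
qed

definition greedy_setup :: com where
  "greedy_setup = Seq (NConst 5 1) (Seq (NAdd 0 0 3) (Seq (NAdd 3 5 4) (Seq (NAdd 4 5 6) (NAdd 0 1 2))))"

lemma greedy_setup_establishes_inv: "\<exists>s. exec greedy_setup (init_state n c u) 5 s \<and> greedy_inv n c u 0 s"
  unfolding greedy_setup_def
  by (intro exI conjI, (rule exec_SeqI exec_NConst exec_NAdd)+)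
    (auto simp: greedy_inv_def init_state_def)

definition greedy_prog :: com where
  "greedy_prog = Seq greedy_setup (While (NLess 1 0) greedy_step)"

lemma greedy_prog_correct:
  assumes "\<And>i j. i \<le> j \<Longrightarrow> j < n \<Longrightarrow> c j \<le> c i" and "\<And>i. i < n \<Longrightarrow> 0 \<le> u i"
  shows "\<exists>s'. exec greedy_prog (init_state n c u) (10 * n + 6) s' \<and> is_minimizer n c u (mem s')"
proof -
  obtain s where init: "exec greedy_setup (init_state n c u) 5 s" "greedy_inv n c u 0 s"
    using greedy_setup_establishes_inv by blast
  have "\<exists>s'. exec (While (NLess 1 0) greedy_step) s (Suc 9 * (n - 0) + 1) s' \<and> greedy_inv n c u n s'"
  proof (rule exec_While_counted[where I = "greedy_inv n c u"])
    fix j s assume "j < n" "greedy_inv n c u j s"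
    moreover have "test_sem (NLess 1 0) s"
      using calculation by (simp add: greedy_inv_def)
    ultimately show "test_sem (NLess 1 0) s \<and> (\<exists>s'. exec greedy_step s 9 s' \<and> greedy_inv n c u (Suc j) s')"
      using greedy_step_preserves_inv by blast
  qed (use init(2) in \<open>auto simp: greedy_inv_def\<close>)
  then obtain s' where loop: "exec (While (NLess 1 0) greedy_step) s (10 * n + 1) s'"
    and "greedy_inv n c u n s'"
    by auto
  then have "is_minimizer n c u (mem s')"
    using is_minimizer_cong[of n "mem s'" "greedy c u"] greedy_is_minimizer[OF assms]
    by (simp add: greedy_inv_def)
  moreover have "exec greedy_prog (init_state n c u) (10 * n + 6) s'"
    unfolding greedy_prog_def by (rule exec_SeqI[OF init(1) loop]) simp
  ultimately show ?thesis by blast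
qed

lemma le_two_mult_ln:
  fixes x :: real
  assumes "2 \<le> x"
  shows "x \<le> 2 * x * ln x"
proof -
  have "1 / 2 \<le> ln (2::real)"
    by (subst ln_ge_iff) (use exp_half_le2 in auto)
  also have "\<dots> \<le> ln x"
    using assms by simp
  finally show ?thesis
    using mult_left_mono[of "1 / 2" "ln x" "2 * x"] assms by simp
qed

theorem theorem5:
  "\<exists>P :: com. \<exists>K :: real.
     \<forall>n :: nat. \<forall>c u :: nat \<Rightarrow> real.
       (\<forall>i j. i \<le> j \<longrightarrow> j < n \<longrightarrow> c j \<le> c i) \<longrightarrow>
       (\<forall>i<n. 0 \<le> c i) \<longrightarrow>
       (\<forall>i<n. 0 < u i) \<longrightarrow>
       (\<exists>t s'. exec P (init_state n c u) t s' \<and>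
              is_minimizer n c u (mem s') \<and>
              (2 \<le> n \<longrightarrow> real t \<le> K * real n * ln (real n)))"
proof (rule exI[of _ greedy_prog], rule exI[of _ 26], intro allI impI)
  fix n :: nat and c u :: "nat \<Rightarrow> real"
  \<comment> \<open>the greedy vector is optimal for every non-increasing \<open>c\<close>\<close>
  assume sorted: "\<forall>i j. i \<le> j \<longrightarrow> j < n \<longrightarrow> c j \<le> c i" and "\<forall>i<n. 0 \<le> c i"
    and pos: "\<forall>i<n. 0 < u i"
  obtain s' where "exec greedy_prog (init_state n c u) (10 * n + 6) s'" "is_minimizer n c u (mem s')"
    using greedy_prog_correct[of n c u] sorted pos by (meson less_imp_le)
  moreover have "real (10 * n + 6) \<le> 26 * real n * ln (real n)" if "2 \<le> n"
  proof -
    have "real n \<le> 2 * real n * ln (real n)"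
      using that by (intro le_two_mult_ln) simp
    then show ?thesis
      using that by linarith
  qed
  ultimately show "\<exists>t s'. exec greedy_prog (init_state n c u) t s' \<and> is_minimizer n c u (mem s') \<and>
       (2 \<le> n \<longrightarrow> real t \<le> 26 * real n * ln (real n))"
    by blast
qed

end
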